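(* Let $\Lambda_f$ be a uniformly random numerical semigroup with Frobenius number $f$. There are constants $\mu_0$ and $\mu_1$ such that, as $f \to \infty$, the expected value $\mathbb{E}[m(\Lambda_f)] - f/2$ converges to $\mu_0$ along even $f$ and to $\mu_1$ along odd $f$.
   Context: A numerical semigroup is a subset $\Lambda \subseteq \mathbb{N}_0$ containing $0$, closed under addition, with finite complement; its multiplicity $m(\Lambda)$ is $\min(\Lambda\setminus\{0\})$, its conductor is the least $c$ with $c + \mathbb{N}_0 \subseteq \Lambda$, and its Frobenius number is the conductor minus $1$. *)

theory Defs
  imports Complex_Main
begin

definition numerical_semigroup :: "nat set \<Rightarrow> bool" where
  "numerical_semigroup S \<longleftrightarrow> 0 \<in> S \<and> (\<forall>a\<in>S. \<forall>b\<in>S. a + b \<in> S) \<and> finite (UNIV - S)"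

definition multiplicity_ns :: "nat set \<Rightarrow> nat" where
  "multiplicity_ns S = (LEAST n. n \<in> S \<and> n \<noteq> 0)"

definition conductor :: "nat set \<Rightarrow> nat" where
  "conductor S = (LEAST c. \<forall>n\<ge>c. n \<in> S)"

definition frobenius :: "nat set \<Rightarrow> int" where
  "frobenius S = int (conductor S) - 1"

definition semigroups_frob :: "nat \<Rightarrow> nat set set" where
  "semigroups_frob f = {S. numerical_semigroup S \<and> frobenius S = int f}"

definition expected_multiplicity :: "nat \<Rightarrow> real" where
  "expected_multiplicity f =
     (\<Sum>S\<in>semigroups_frob f. real (multiplicity_ns S)) / real (card (semigroups_frob f))"

end

theory Submission
  imports Defs "HOL-Analysis.Uniform_Limit" "HOL-Real_Asymp.Real_Asymp"
begin

text \<open>A numerical semigroup with Frobenius number \<open>f\<close> is determined by its elements in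
  \<open>{1..<f}\<close>, and the possible sets \<open>P\<close> of such elements are those closed under sums below \<open>f\<close>
  with no two elements summing to \<open>f\<close>. If the minimum \<open>m\<close> of \<open>P\<close> exceeds \<open>f / 2\<close>, then \<open>P\<close> is
  \<open>m\<close> together with an arbitrary subset of \<open>{m<..<f}\<close>. If \<open>2 * m < f\<close>, then \<open>P\<close> is its prefix
  \<open>Q = P \<inter> {..<f - m}\<close> together with an arbitrary superset of the sums of \<open>Q\<close> lying in
  \<open>{f - m<..<f}\<close>, so the number of such \<open>P\<close> is \<open>2 ^ (m - 1)\<close> times a sum over prefixes of
  \<open>(1/2) ^ card (forced_sums f m Q)\<close>. This sum equals a constant \<open>psi (f - 2 * m)\<close> once
  \<open>f < 3 * m\<close>, and it is at most \<open>1 + t * (7/5) ^ t\<close> with \<open>t = f - 2 * m\<close> in general.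

  Write \<open>f = 2 * k + e\<close>. Divided by \<open>2 ^ k\<close>, the number of sets with minimum at a fixed distance
  from \<open>k\<close> therefore converges, and since \<open>(7/5) ^ 2 < 2\<close> these normalised counts are dominated by
  a summable sequence. By Tannery's theorem the normalised number of sets and the normalised sum
  of \<open>m - f / 2\<close> over all sets both converge, the former to a positive limit, and
  \<open>E[m] - f / 2\<close> is their quotient.\<close>

section \<open>Semigroups as admissible sets\<close>

definition admissible :: "nat \<Rightarrow> nat set \<Rightarrow> bool" where
  "admissible f P \<longleftrightarrow> P \<subseteq> {1..<f} \<and> (\<forall>x\<in>P. \<forall>y\<in>P. x + y < f \<longrightarrow> x + y \<in> P) \<and>
     (\<forall>x\<in>P. \<forall>y\<in>P. x + y \<noteq> f)"

definition semigroup_of :: "nat \<Rightarrow> nat set \<Rightarrow> nat set" where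
  "semigroup_of f P = insert 0 (P \<union> {f<..})"

definition mult_of :: "nat \<Rightarrow> nat set \<Rightarrow> nat" where
  "mult_of f P = (if P = {} then f + 1 else Min P)"

lemma admissible_finite: "admissible f P \<Longrightarrow> finite P"
  unfolding admissible_def by (meson finite_atLeastLessThan finite_subset)

lemma finite_admissible: "finite {P. admissible f P}"
  by (rule finite_subset[of _ "Pow {1..<f}"]) (auto simp: admissible_def)

lemma admissible_empty: "admissible f {}"
  by (simp add: admissible_def)

lemma conductor_semigroup_of:
  assumes "admissible f P" "f \<ge> 1"
  shows "conductor (semigroup_of f P) = f + 1"
  unfolding conductor_def
proof (rule Least_equality)
  show "\<forall>n\<ge>f + 1. n \<in> semigroup_of f P" by (auto simp: semigroup_of_def)
next
  fix c assume "\<forall>n\<ge>c. n \<in> semigroup_of f P"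
  moreover have "f \<notin> semigroup_of f P"
    using assms unfolding admissible_def semigroup_of_def by auto
  ultimately show "f + 1 \<le> c" by (metis Suc_eq_plus1 not_less_eq_eq)
qed

lemma semigroup_of_in_semigroups_frob:
  assumes P: "admissible f P" and "f \<ge> 1"
  shows "semigroup_of f P \<in> semigroups_frob f"
proof -
  have "a + b \<in> semigroup_of f P" if "a \<in> semigroup_of f P" "b \<in> semigroup_of f P" for a b
  proof (cases "a = 0 \<or> b = 0")
    case False
    then have "a \<in> P \<or> a > f" "b \<in> P \<or> b > f" using that by (auto simp: semigroup_of_def)
    then show ?thesis
      using P unfolding admissible_def semigroup_of_def by (cases "a + b" f rule: linorder_cases) auto
  qed (use that in auto)
  moreover have "finite (UNIV - semigroup_of f P)"
    by (rule finite_subset[of _ "{..f}"]) (auto simp: semigroup_of_def)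
  ultimately show ?thesis
    using conductor_semigroup_of[OF assms]
    by (simp add: semigroups_frob_def frobenius_def numerical_semigroup_def semigroup_of_def)
qed

lemma multiplicity_semigroup_of:
  assumes P: "admissible f P"
  shows "multiplicity_ns (semigroup_of f P) = mult_of f P"
proof (cases "P = {}")
  case True
  then show ?thesis unfolding multiplicity_ns_def mult_of_def semigroup_of_def
    by (intro Least_equality) auto
next
  case False
  have "Min P \<in> P" using Min_in[OF admissible_finite[OF P] False] .
  then have "Min P \<ge> 1" "Min P < f" using P unfolding admissible_def by auto
  then show ?thesis
    unfolding multiplicity_ns_def mult_of_def semigroup_of_def using False \<open>Min P \<in> P\<close>
    by (intro Least_equality) (auto simp: admissible_finite[OF P])
qed

lemma semigroups_frob_imp_admissible:
  assumes S: "S \<in> semigroups_frob f" and "f \<ge> 1"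
  shows "admissible f (S \<inter> {1..<f})" and "S = semigroup_of f (S \<inter> {1..<f})"
proof -
  have "0 \<in> S" and closed: "\<And>a b. a \<in> S \<Longrightarrow> b \<in> S \<Longrightarrow> a + b \<in> S"
    and cofinite: "finite (UNIV - S)" and c: "conductor S = f + 1"
    using S by (auto simp: semigroups_frob_def numerical_semigroup_def frobenius_def)
  obtain N where "\<forall>x\<in>UNIV - S. x \<le> N"
    using cofinite finite_nat_set_iff_bounded_le by blast
  then have "\<forall>n\<ge>Suc N. n \<in> S" by force
  then have above: "\<forall>n\<ge>f + 1. n \<in> S"
    using LeastI_ex[of "\<lambda>c. \<forall>n\<ge>c. n \<in> S"] c unfolding conductor_def by auto
  have "f \<notin> S"
  proof
    assume "f \<in> S"
    then have "\<forall>n\<ge>f. n \<in> S" using above by (metis Suc_eq_plus1 le_antisym not_less_eq_eq)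
    then have "conductor S \<le> f" unfolding conductor_def by (rule Least_le)
    then show False using c by simp
  qed
  then show "admissible f (S \<inter> {1..<f})"
    using closed unfolding admissible_def by auto
  show "S = semigroup_of f (S \<inter> {1..<f})"
    using \<open>0 \<in> S\<close> above \<open>f \<notin> S\<close> unfolding semigroup_of_def
    by (auto simp: Suc_le_eq) (metis Suc_leI linorder_neqE_nat not_less_eq_eq)
qed

lemma semigroup_of_inter: "admissible f P \<Longrightarrow> semigroup_of f P \<inter> {1..<f} = P"
  unfolding admissible_def semigroup_of_def by auto

lemma semigroups_frob_eq_image:
  assumes "f \<ge> 1"
  shows "semigroups_frob f = semigroup_of f ` {P. admissible f P}"
  using semigroups_frob_imp_admissible[OF _ assms] semigroup_of_in_semigroups_frob[OF _ assms]
  by blast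

lemma inj_on_semigroup_of: "inj_on (semigroup_of f) {P. admissible f P}"
  by (rule inj_onI) (metis mem_Collect_eq semigroup_of_inter)

lemma expected_multiplicity_eq:
  assumes "f \<ge> 1"
  shows "expected_multiplicity f =
    (\<Sum>P | admissible f P. real (mult_of f P)) / real (card {P. admissible f P})"
  unfolding expected_multiplicity_def semigroups_frob_eq_image[OF assms]
    sum.reindex[OF inj_on_semigroup_of] card_image[OF inj_on_semigroup_of]
  by (simp add: multiplicity_semigroup_of)

lemma expected_multiplicity_centered:
  assumes "f \<ge> 1"
  shows "expected_multiplicity f - real f / 2 =
    (\<Sum>P | admissible f P. real (mult_of f P) - real f / 2) / real (card {P. admissible f P})"
proof -
  have "card {P. admissible f P} \<noteq> 0"
    using finite_admissible admissible_empty by (metis card_0_eq empty_Collect_eq)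
  moreover have "(\<Sum>P | admissible f P. real (mult_of f P) - real f / 2) =
      (\<Sum>P | admissible f P. real (mult_of f P)) - real (card {P. admissible f P}) * (real f / 2)"
    by (simp add: sum_subtractf)
  ultimately show ?thesis
    using expected_multiplicity_eq[OF assms] by (simp add: diff_divide_distrib)
qed

section \<open>Counting by multiplicity\<close>

definition count_mult :: "nat \<Rightarrow> nat \<Rightarrow> nat" where
  "count_mult f m = card {P. admissible f P \<and> mult_of f P = m}"

lemma admissible_mult_ofD:
  assumes "admissible f P" "mult_of f P = m" "m < f"
  shows "m \<in> P" and "\<And>x. x \<in> P \<Longrightarrow> m \<le> x" and "m \<ge> 1" and "P \<subseteq> {m..<f}"
proof -
  have "P \<noteq> {}" using assms unfolding mult_of_def by auto
  then have "Min P = m" using assms unfolding mult_of_def by auto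
  then show "m \<in> P" "\<And>x. x \<in> P \<Longrightarrow> m \<le> x"
    using Min_in[OF admissible_finite[OF assms(1)] \<open>P \<noteq> {}\<close>] admissible_finite[OF assms(1)] by auto
  then show "m \<ge> 1" "P \<subseteq> {m..<f}" using assms(1) unfolding admissible_def by auto
qed

lemma mult_of_eqI:
  assumes "finite P" "m \<in> P" "\<And>x. x \<in> P \<Longrightarrow> m \<le> x"
  shows "mult_of f P = m"
  using assms unfolding mult_of_def by (auto intro: Min_eqI)

lemma mult_of_nonempty:
  assumes "admissible f P" "P \<noteq> {}"
  shows "mult_of f P \<in> {1..<f}"
  using Min_in[OF admissible_finite[OF assms(1)] assms(2)] assms
  unfolding mult_of_def admissible_def by auto

lemma mult_of_range: "admissible f P \<Longrightarrow> mult_of f P \<in> {1..<f} \<union> {f + 1}"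
  using mult_of_nonempty[of f P] by (cases "P = {}") (auto simp: mult_of_def)

lemma sum_admissible_by_mult:
  assumes "f \<ge> 1"
  shows "(\<Sum>P | admissible f P. g (mult_of f P)) = (\<Sum>m = 1..f + 1. g m * real (count_mult f m))"
proof -
  have "(\<Sum>m = 1..f + 1. g m * real (count_mult f m)) =
        (\<Sum>m = 1..f + 1. \<Sum>P | admissible f P \<and> mult_of f P = m. g (mult_of f P))"
    unfolding count_mult_def by (intro sum.cong refl) auto
  also have "\<dots> = (\<Sum>P | admissible f P. g (mult_of f P))"
  proof (rule sum.group[OF finite_admissible, of _ "mult_of f", simplified])
    show "mult_of f ` {P. admissible f P} \<subseteq> {1..f + 1}"
      using mult_of_range[of f] by fastforce
  qed simp
  finally show ?thesis ..
qed

lemma count_mult_Suc_self: "count_mult f (f + 1) = 1"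
proof -
  have "P = {}" if "admissible f P" "mult_of f P = f + 1" for P
    using mult_of_nonempty[OF that(1)] that(2) by force
  moreover have "mult_of f {} = f + 1" by (simp add: mult_of_def)
  ultimately have "{P. admissible f P \<and> mult_of f P = f + 1} = {{}}"
    using admissible_empty by blast
  then show ?thesis unfolding count_mult_def by simp
qed

lemma count_mult_self: "count_mult f f = 0"
proof -
  have "mult_of f P \<noteq> f" if "admissible f P" for P
    using mult_of_range[OF that] by auto
  then have "{P. admissible f P \<and> mult_of f P = f} = {}" by blast
  then show ?thesis by (metis card.empty count_mult_def)
qed

lemma count_mult_half:
  assumes "2 * m = f" "f \<ge> 1"
  shows "count_mult f m = 0"
proof -
  have "\<not> (admissible f P \<and> mult_of f P = m)" for P
  proof
    assume "admissible f P \<and> mult_of f P = m"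
    then have "admissible f P" "m \<in> P" using admissible_mult_ofD(1)[of f P m] assms by auto
    then show False using assms(1) unfolding admissible_def by (metis mult_2)
  qed
  then have "{P. admissible f P \<and> mult_of f P = m} = {}" by blast
  then show ?thesis by (metis card.empty count_mult_def)
qed

lemma count_mult_above_half:
  assumes "f < 2 * m" "m < f"
  shows "count_mult f m = 2 ^ (f - m - 1)"
proof -
  have "{P. admissible f P \<and> mult_of f P = m} = insert m ` Pow {m<..<f}"
  proof (intro equalityI subsetI)
    fix P assume "P \<in> {P. admissible f P \<and> mult_of f P = m}"
    then have "P = insert m (P - {m})" "P - {m} \<in> Pow {m<..<f}"
      using admissible_mult_ofD[of f P m] assms(2) by force+
    then show "P \<in> insert m ` Pow {m<..<f}" by blast
  next
    fix P assume "P \<in> insert m ` Pow {m<..<f}"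
    then obtain X where X: "X \<subseteq> {m<..<f}" and P: "P = insert m X" by auto
    have ge: "m \<le> x" if "x \<in> P" for x
      using that X P by auto
    have "admissible f P"
      unfolding admissible_def
    proof (intro conjI ballI impI)
      show "P \<subseteq> {1..<f}" using X P assms by auto
    next
      fix x y assume "x \<in> P" "y \<in> P"
      then have "f < x + y" using ge[of x] ge[of y] assms(1) by linarith
      then show "x + y \<noteq> f" by simp
      assume "x + y < f"
      with \<open>f < x + y\<close> show "x + y \<in> P" by simp
    qed
    moreover have "mult_of f P = m"
      using X P by (intro mult_of_eqI) (auto intro: finite_subset)
    ultimately show "P \<in> {P. admissible f P \<and> mult_of f P = m}" by simp
  qed
  moreover have "inj_on (insert m) (Pow {m<..<f})"
    by (rule inj_onI) (metis Diff_insert_absorb PowD greaterThanLessThan_iff less_irrefl subsetD)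
  ultimately show ?thesis
    unfolding count_mult_def by (simp add: card_image card_Pow)
qed

lemma card_sets_between:
  assumes "finite X" "A \<subseteq> X"
  shows "card {R. A \<subseteq> R \<and> R \<subseteq> X} = 2 ^ (card X - card A)"
proof -
  have "{R. A \<subseteq> R \<and> R \<subseteq> X} = (\<lambda>Y. Y \<union> A) ` Pow (X - A)"
  proof (intro equalityI subsetI)
    fix R assume "R \<in> {R. A \<subseteq> R \<and> R \<subseteq> X}"
    then have "R = (R - A) \<union> A" "R - A \<in> Pow (X - A)" by auto
    then show "R \<in> (\<lambda>Y. Y \<union> A) ` Pow (X - A)" by blast
  qed (use assms in auto)
  moreover have "inj_on (\<lambda>Y. Y \<union> A) (Pow (X - A))"
    by (rule inj_onI) auto
  ultimately show ?thesis
    using assms by (simp add: card_image card_Pow card_Diff_subset finite_subset)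
qed

definition sumset :: "nat set \<Rightarrow> nat set" where
  "sumset B = {x + y | x y. x \<in> B \<and> y \<in> B}"

definition forced_sums :: "nat \<Rightarrow> nat \<Rightarrow> nat set \<Rightarrow> nat set" where
  "forced_sums f m Q = sumset Q \<inter> {f - m<..<f}"

definition prefixes :: "nat \<Rightarrow> nat \<Rightarrow> nat set set" where
  "prefixes f m = (\<lambda>P. P \<inter> {..<f - m}) ` {P. admissible f P \<and> mult_of f P = m}"

lemma forced_sums_subset: "forced_sums f m Q \<subseteq> {f - m<..<f}"
  unfolding forced_sums_def by auto

lemma finite_prefixes: "finite (prefixes f m)"
  unfolding prefixes_def by (rule finite_imageI) (auto intro: finite_subset[OF _ finite_admissible])

lemma prefix_props:
  assumes Q: "Q \<in> prefixes f m" and mf: "2 * m < f"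
  shows "m \<in> Q" and "Q \<subseteq> {m..<f - m}" and "m \<ge> 1"
    and "\<And>x y. x \<in> Q \<Longrightarrow> y \<in> Q \<Longrightarrow> x + y < f - m \<Longrightarrow> x + y \<in> Q"
    and "\<And>x y. x \<in> Q \<Longrightarrow> y \<in> Q \<Longrightarrow> x + y \<noteq> f"
    and "\<And>x. x \<in> Q \<Longrightarrow> x + m \<noteq> f - m"
proof -
  obtain P where P: "admissible f P" "mult_of f P = m" and QP: "Q = P \<inter> {..<f - m}"
    using Q unfolding prefixes_def by auto
  have "m < f" using mf by simp
  note pm = admissible_mult_ofD[OF P this]
  show "m \<in> Q" "Q \<subseteq> {m..<f - m}" "m \<ge> 1" using pm QP mf by auto
  show "\<And>x y. x \<in> Q \<Longrightarrow> y \<in> Q \<Longrightarrow> x + y < f - m \<Longrightarrow> x + y \<in> Q"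
    and "\<And>x y. x \<in> Q \<Longrightarrow> y \<in> Q \<Longrightarrow> x + y \<noteq> f"
    using P(1) QP unfolding admissible_def by auto
  show "x + m \<noteq> f - m" if "x \<in> Q" for x
  proof
    assume e: "x + m = f - m"
    have "x \<in> P" using that QP by auto
    moreover have "x + m < f" using e mf pm(3) by simp
    ultimately have "x + m \<in> P" using P(1) pm(1) unfolding admissible_def by blast
    moreover have "m + (x + m) = f" using e mf by simp
    ultimately show False using P(1) pm(1) unfolding admissible_def by metis
  qed
qed

text \<open>Every sum involving an element above \<open>f - m\<close> exceeds \<open>f\<close>, so only sums within \<open>Q\<close>
  need to be checked.\<close>
lemma admissible_Un_above:
  assumes mf: "2 * m < f" and m: "m \<ge> 1" and Q: "Q \<subseteq> {m..<f - m}" and R: "R \<subseteq> {f - m<..<f}"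
    and avoid: "\<And>x y. x \<in> Q \<Longrightarrow> y \<in> Q \<Longrightarrow> x + y \<noteq> f"
    and closed: "\<And>x y. x \<in> Q \<Longrightarrow> y \<in> Q \<Longrightarrow> x + y < f \<Longrightarrow> x + y \<in> Q \<union> R"
  shows "admissible f (Q \<union> R)"
proof -
  have ge: "m \<le> x" if "x \<in> Q \<union> R" for x
    using that Q R mf by force
  have above: "f < x + y" if "x \<in> Q \<union> R" "y \<in> Q \<union> R" "\<not> (x \<in> Q \<and> y \<in> Q)" for x y
  proof -
    have "f - m < x \<or> f - m < y" using that R by auto
    then show ?thesis using ge[OF that(1)] ge[OF that(2)] mf by auto
  qed
  show ?thesis unfolding admissible_def
  proof (intro conjI ballI impI)
    show "Q \<union> R \<subseteq> {1..<f}" using Q R m by force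
  next
    fix x y assume x: "x \<in> Q \<union> R" and y: "y \<in> Q \<union> R"
    show "x + y \<noteq> f"
      using avoid above[OF x y] by (cases "x \<in> Q \<and> y \<in> Q") auto
    assume "x + y < f"
    then show "x + y \<in> Q \<union> R" using closed above[OF x y] by fastforce
  qed
qed

lemma admissible_prefix_Un:
  assumes P0: "admissible f P0" "mult_of f P0 = m" and mf: "2 * m < f"
  defines "Q \<equiv> P0 \<inter> {..<f - m}"
  assumes R: "forced_sums f m Q \<subseteq> R" "R \<subseteq> {f - m<..<f}"
  shows "admissible f (Q \<union> R)" and "mult_of f (Q \<union> R) = m"
proof -
  have "m < f" using mf by simp
  note p0 = admissible_mult_ofD[OF P0 this]
  have closed: "x + y \<in> Q \<union> R" if "x \<in> Q" "y \<in> Q" "x + y < f" for x y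
  proof -
    have inP0: "x + y \<in> P0" using that P0(1) unfolding Q_def admissible_def by blast
    moreover have "m + (x + y) \<noteq> f" using inP0 p0(1) P0(1) unfolding admissible_def by blast
    then have "x + y \<noteq> f - m" using mf by auto
    show ?thesis
    proof (cases "x + y < f - m")
      case True
      then show ?thesis using inP0 unfolding Q_def by simp
    next
      case False
      with \<open>x + y \<noteq> f - m\<close> that(3) have "x + y \<in> {f - m<..<f}" by auto
      moreover have "x + y \<in> sumset Q" using that(1,2) unfolding sumset_def by blast
      ultimately show ?thesis using R(1) unfolding forced_sums_def by blast
    qed
  qed
  show adm: "admissible f (Q \<union> R)"
    by (rule admissible_Un_above[OF mf p0(3) _ R(2) _ closed])
      (use p0(4) P0(1) in \<open>auto simp: Q_def admissible_def\<close>)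
  have "m \<in> Q" unfolding Q_def using p0 mf by auto
  moreover have "m \<le> x" if "x \<in> Q \<union> R" for x
    using that p0(2) R(2) mf unfolding Q_def by force
  ultimately show "mult_of f (Q \<union> R) = m"
    using admissible_finite[OF adm] by (intro mult_of_eqI) auto
qed

text \<open>Since \<open>m + (f - m) = f\<close>, an admissible set with minimum \<open>m\<close> avoids \<open>f - m\<close>; above
  \<open>f - m\<close> it must contain the sums forced by its prefix and is otherwise arbitrary.\<close>
lemma admissible_fiber_prefix:
  assumes P0: "admissible f P0" "mult_of f P0 = m" and mf: "2 * m < f"
  defines "Q \<equiv> P0 \<inter> {..<f - m}"
  shows "{P. (admissible f P \<and> mult_of f P = m) \<and> P \<inter> {..<f - m} = Q} =
         (\<lambda>R. Q \<union> R) ` {R. forced_sums f m Q \<subseteq> R \<and> R \<subseteq> {f - m<..<f}}"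
proof (intro equalityI subsetI)
  fix P assume "P \<in> {P. (admissible f P \<and> mult_of f P = m) \<and> P \<inter> {..<f - m} = Q}"
  then have P: "admissible f P" and mm: "mult_of f P = m" and hq: "P \<inter> {..<f - m} = Q" by auto
  have "m < f" using mf by simp
  note pm = admissible_mult_ofD[OF P mm this]
  have "m + (f - m) = f" using mf by simp
  then have "f - m \<notin> P"
    using P pm(1) unfolding admissible_def by metis
  then have "P = Q \<union> (P \<inter> {f - m<..<f})"
    using hq pm(4) mf by fastforce
  moreover have "forced_sums f m Q \<subseteq> P \<inter> {f - m<..<f}"
    using P hq unfolding forced_sums_def sumset_def admissible_def by auto
  ultimately show "P \<in> (\<lambda>R. Q \<union> R) ` {R. forced_sums f m Q \<subseteq> R \<and> R \<subseteq> {f - m<..<f}}"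
    by blast
next
  fix P assume "P \<in> (\<lambda>R. Q \<union> R) ` {R. forced_sums f m Q \<subseteq> R \<and> R \<subseteq> {f - m<..<f}}"
  then obtain R where R: "forced_sums f m Q \<subseteq> R" "R \<subseteq> {f - m<..<f}" and P: "P = Q \<union> R"
    by auto
  have "P \<inter> {..<f - m} = Q" using P R(2) unfolding Q_def by auto
  then show "P \<in> {P. (admissible f P \<and> mult_of f P = m) \<and> P \<inter> {..<f - m} = Q}"
    using admissible_prefix_Un[OF P0 mf R[unfolded Q_def]] P unfolding Q_def by simp
qed

lemma card_fiber_prefix:
  assumes Q: "Q \<in> prefixes f m" and mf: "2 * m < f"
  shows "card {P. (admissible f P \<and> mult_of f P = m) \<and> P \<inter> {..<f - m} = Q} =
    2 ^ (m - 1 - card (forced_sums f m Q))"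
proof -
  obtain P0 where P0: "admissible f P0" "mult_of f P0 = m" and Q: "Q = P0 \<inter> {..<f - m}"
    using Q unfolding prefixes_def by auto
  let ?R = "{R. forced_sums f m Q \<subseteq> R \<and> R \<subseteq> {f - m<..<f}}"
  have "inj_on (\<lambda>R. Q \<union> R) ?R"
  proof (rule inj_onI)
    fix R1 R2 assume R: "R1 \<in> ?R" "R2 \<in> ?R" and eq: "Q \<union> R1 = Q \<union> R2"
    have "Q \<inter> {f - m<..<f} = {}" using Q by auto
    then have "R1 = (Q \<union> R1) \<inter> {f - m<..<f}" "R2 = (Q \<union> R2) \<inter> {f - m<..<f}"
      using R by blast+
    then show "R1 = R2" using eq by simp
  qed
  then have "card {P. (admissible f P \<and> mult_of f P = m) \<and> P \<inter> {..<f - m} = Q} = card ?R"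
    using admissible_fiber_prefix[OF P0 mf] Q by (simp add: card_image)
  also have "\<dots> = 2 ^ (card {f - m<..<f} - card (forced_sums f m Q))"
    by (rule card_sets_between) (auto simp: forced_sums_subset)
  finally show ?thesis using mf by simp
qed

lemma count_mult_eq_sum_prefixes:
  assumes mf: "2 * m < f"
  shows "real (count_mult f m) = 2 ^ (m - 1) * (\<Sum>Q\<in>prefixes f m. (1/2) ^ card (forced_sums f m Q))"
proof -
  let ?G = "{P. admissible f P \<and> mult_of f P = m}"
  have fin: "finite ?G" by (rule finite_subset[OF _ finite_admissible]) auto
  have "(\<Sum>Q\<in>prefixes f m. \<Sum>P\<in>{P\<in>?G. P \<inter> {..<f - m} = Q}. 1::nat) = (\<Sum>P\<in>?G. 1)"
    unfolding prefixes_def by (rule sum.group[OF fin finite_imageI[OF fin] subset_refl])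
  then have "count_mult f m = (\<Sum>Q\<in>prefixes f m. 2 ^ (m - 1 - card (forced_sums f m Q)))"
    unfolding count_mult_def using card_fiber_prefix[OF _ mf] by simp
  then have "real (count_mult f m) = (\<Sum>Q\<in>prefixes f m. 2 ^ (m - 1 - card (forced_sums f m Q)))"
    by simp
  also have "\<dots> = (\<Sum>Q\<in>prefixes f m. 2 ^ (m - 1) * (1/2) ^ card (forced_sums f m Q))"
  proof (rule sum.cong[OF refl])
    fix Q
    have "card (forced_sums f m Q) \<le> m - 1"
      using card_mono[OF _ forced_sums_subset[of f m Q]] mf by simp
    then have "(2::real) ^ (m - 1 - card (forced_sums f m Q)) =
        2 ^ (m - 1) / 2 ^ card (forced_sums f m Q)"
      by (rule power_diff[rotated]) simp
    then show "(2::real) ^ (m - 1 - card (forced_sums f m Q)) =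
        2 ^ (m - 1) * (1/2) ^ card (forced_sums f m Q)"
      by (simp add: power_one_over)
  qed
  finally show ?thesis by (simp add: sum_distrib_left)
qed

definition base_sets :: "nat \<Rightarrow> nat set set" where
  "base_sets t = {B. 0 \<in> B \<and> B \<subseteq> {..<t} \<and> (\<forall>x\<in>B. \<forall>y\<in>B. x + y \<noteq> t)}"

definition psi :: "nat \<Rightarrow> real" where
  "psi t = (\<Sum>B\<in>base_sets t. (1/2) ^ card (sumset B \<inter> {..<t}))"

lemma psi_nonneg: "psi t \<ge> 0"
  unfolding psi_def by (intro sum_nonneg) simp

lemma psi_0: "psi 0 = 0"
  by (simp add: psi_def base_sets_def)

lemma shifted_base_set_in_prefixes:
  assumes mf: "2 * m < f" and f3: "f < 3 * m" and B: "B \<in> base_sets (f - 2 * m)"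
  shows "(+) m ` B \<in> prefixes f m"
proof -
  define Q where Q: "Q = (+) m ` B"
  have "0 \<in> B" and Blt: "\<And>x. x \<in> B \<Longrightarrow> x < f - 2 * m"
    and Bt: "\<And>x y. x \<in> B \<Longrightarrow> y \<in> B \<Longrightarrow> x + y \<noteq> f - 2 * m"
    using B unfolding base_sets_def by auto
  have Qrange: "Q \<subseteq> {m..<f - m}" using Q Blt mf by force
  let ?P = "Q \<union> forced_sums f m Q"
  have adm: "admissible f ?P"
  proof (rule admissible_Un_above[OF mf _ Qrange forced_sums_subset])
    show "x + y \<noteq> f" if "x \<in> Q" "y \<in> Q" for x y
      using that Bt mf unfolding Q by force
    show "x + y \<in> ?P" if "x \<in> Q" "y \<in> Q" "x + y < f" for x y
    proof -
      have "m \<le> x" "m \<le> y" using that(1,2) Qrange by auto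
      then have "x + y \<in> {f - m<..<f}" using that(3) f3 by auto
      moreover have "x + y \<in> sumset Q" using that(1,2) unfolding sumset_def by blast
      ultimately show ?thesis unfolding forced_sums_def by blast
    qed
  qed (use f3 in simp)
  have "m \<le> x" if "x \<in> ?P" for x
    using that Qrange forced_sums_subset[of f m Q] mf by force
  moreover have "m \<in> Q" using \<open>0 \<in> B\<close> Q by force
  ultimately have "mult_of f ?P = m"
    using admissible_finite[OF adm] by (intro mult_of_eqI) auto
  moreover have "?P \<inter> {..<f - m} = Q" using Qrange unfolding forced_sums_def by auto
  ultimately have "Q \<in> prefixes f m"
    using adm unfolding prefixes_def by (metis (mono_tags, lifting) image_eqI mem_Collect_eq)
  then show ?thesis unfolding Q .
qed

text \<open>When \<open>f < 3 * m\<close> any two elements of a prefix sum to at least \<open>f - m\<close>, so closure under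
  sums is vacuous and only the condition of avoiding \<open>f\<close> remains.\<close>
lemma prefixes_eq_base_sets:
  assumes mf: "2 * m < f" and f3: "f < 3 * m"
  shows "prefixes f m = (\<lambda>B. (+) m ` B) ` base_sets (f - 2 * m)"
proof (intro equalityI subsetI)
  fix Q assume Q: "Q \<in> prefixes f m"
  note qp = prefix_props[OF Q mf]
  let ?B = "(\<lambda>x. x - m) ` Q"
  have "Q = (+) m ` ?B"
    using qp(2) by (force simp: image_image)
  moreover have "?B \<in> base_sets (f - 2 * m)"
    unfolding base_sets_def
  proof (intro CollectI conjI ballI)
    show "0 \<in> ?B" using qp(1) by force
    show "?B \<subseteq> {..<f - 2 * m}" using qp(2) by force
  next
    fix x y assume "x \<in> ?B" "y \<in> ?B"
    then obtain x' y' where "x' \<in> Q" "y' \<in> Q" "x = x' - m" "y = y' - m" by auto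
    then show "x + y \<noteq> f - 2 * m" using qp(2) qp(5)[of x' y'] mf by force
  qed
  ultimately show "Q \<in> (\<lambda>B. (+) m ` B) ` base_sets (f - 2 * m)" by blast
next
  fix Q assume "Q \<in> (\<lambda>B. (+) m ` B) ` base_sets (f - 2 * m)"
  then show "Q \<in> prefixes f m" using shifted_base_set_in_prefixes[OF mf f3] by blast
qed

lemma forced_sums_shift:
  assumes "f < 3 * m"
  shows "forced_sums f m ((+) m ` B) = (+) (2 * m) ` (sumset B \<inter> {..<f - 2 * m})"
proof (intro equalityI subsetI)
  fix z assume "z \<in> forced_sums f m ((+) m ` B)"
  then obtain x y where "x \<in> B" "y \<in> B" "z = (m + x) + (m + y)" "z < f"
    unfolding forced_sums_def sumset_def by auto
  then have "z = 2 * m + (x + y)" "x + y \<in> sumset B \<inter> {..<f - 2 * m}"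
    unfolding sumset_def by auto
  then show "z \<in> (+) (2 * m) ` (sumset B \<inter> {..<f - 2 * m})" by blast
next
  fix z assume "z \<in> (+) (2 * m) ` (sumset B \<inter> {..<f - 2 * m})"
  then obtain x y where "x \<in> B" "y \<in> B" "z = (m + x) + (m + y)" "x + y < f - 2 * m"
    unfolding sumset_def by auto
  then show "z \<in> forced_sums f m ((+) m ` B)"
    unfolding forced_sums_def sumset_def using assms by force
qed

lemma count_mult_eq_psi:
  assumes mf: "2 * m < f" and f3: "f < 3 * m"
  shows "real (count_mult f m) = 2 ^ (m - 1) * psi (f - 2 * m)"
proof -
  have inj: "inj_on (\<lambda>B. (+) m ` B) (base_sets (f - 2 * m))"
    by (rule inj_onI) (simp add: inj_image_eq_iff)
  have "(\<Sum>Q\<in>prefixes f m. (1/2) ^ card (forced_sums f m Q)) =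
        (\<Sum>B\<in>base_sets (f - 2 * m). (1/2::real) ^ card (forced_sums f m ((+) m ` B)))"
    unfolding prefixes_eq_base_sets[OF assms] by (rule sum.reindex[OF inj, unfolded comp_def])
  also have "\<dots> = psi (f - 2 * m)"
    unfolding psi_def forced_sums_shift[OF f3] by (simp add: card_image)
  finally show ?thesis using count_mult_eq_sum_prefixes[OF mf] by simp
qed

section \<open>Weighted subsets of arithmetic progressions\<close>

definition step_exits :: "nat \<Rightarrow> nat set \<Rightarrow> nat set \<Rightarrow> nat set" where
  "step_exits a V C = {y\<in>C. y + a \<in> V \<and> y + a \<notin> C}"

text \<open>In the application \<open>C\<close> is the part of a prefix inside a window \<open>V\<close>, \<open>l p\<close> bounds the number
  of ways to complete the residue class of \<open>p\<close>, and the elements of \<open>C\<close> and of its exits each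
  force a different sum.\<close>
definition chain_weight :: "nat \<Rightarrow> (nat \<Rightarrow> nat) \<Rightarrow> nat set \<Rightarrow> nat set \<Rightarrow> real" where
  "chain_weight a l V C = (\<Prod>p\<in>C. real (l p)) * (1/2) ^ (card C + card (step_exits a V C))"

definition chain_total :: "nat \<Rightarrow> (nat \<Rightarrow> nat) \<Rightarrow> nat set \<Rightarrow> real" where
  "chain_total a l V = (\<Sum>C\<in>Pow V. chain_weight a l V C)"

definition chain_total_at :: "nat \<Rightarrow> (nat \<Rightarrow> nat) \<Rightarrow> nat set \<Rightarrow> nat \<Rightarrow> real" where
  "chain_total_at a l V q = (\<Sum>C | C \<in> Pow V \<and> q \<in> C. chain_weight a l V C)"

lemma chain_weight_nonneg: "chain_weight a l V C \<ge> 0"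
  unfolding chain_weight_def by (intro mult_nonneg_nonneg prod_nonneg) auto

lemma chain_total_nonneg: "chain_total a l V \<ge> 0"
  unfolding chain_total_def by (intro sum_nonneg chain_weight_nonneg)

lemma chain_total_empty: "chain_total a l {} = 1"
  unfolding chain_total_def chain_weight_def step_exits_def by simp

lemma chain_total_at_nonneg: "chain_total_at a l V q \<ge> 0"
  unfolding chain_total_at_def by (intro sum_nonneg chain_weight_nonneg)

lemma chain_total_at_empty: "chain_total_at a l {} q = 0"
proof -
  have "{C. C \<in> Pow {} \<and> q \<in> C} = {}" by auto
  then show ?thesis unfolding chain_total_at_def by (simp only: sum.empty)
qed

lemma chain_total_at_le: "finite V \<Longrightarrow> chain_total_at a l V q \<le> chain_total a l V"
  unfolding chain_total_at_def chain_total_def by (rule sum_mono2) (auto simp: chain_weight_nonneg)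

lemma chain_weight_Un:
  assumes fA: "finite A" and fB: "finite B" and disj: "A \<inter> B = {}"
    and closedA: "\<And>y. y \<in> A \<Longrightarrow> y + a \<in> A \<union> B \<Longrightarrow> y + a \<in> A"
    and closedB: "\<And>y. y \<in> B \<Longrightarrow> y + a \<in> A \<union> B \<Longrightarrow> y + a \<in> B"
    and X: "X \<subseteq> A" and Y: "Y \<subseteq> B"
  shows "chain_weight a l (A \<union> B) (X \<union> Y) = chain_weight a l A X * chain_weight a l B Y"
proof -
  have fX: "finite X" and fY: "finite Y" and dXY: "X \<inter> Y = {}"
    using X Y fA fB disj finite_subset by auto
  have "step_exits a (A \<union> B) (X \<union> Y) = step_exits a A X \<union> step_exits a B Y"
  proof (intro equalityI subsetI)
    fix y assume y: "y \<in> step_exits a (A \<union> B) (X \<union> Y)"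
    show "y \<in> step_exits a A X \<union> step_exits a B Y"
    proof (cases "y \<in> X")
      case True
      then show ?thesis using y closedA[of y] X unfolding step_exits_def by auto
    next
      case False
      then show ?thesis using y closedB[of y] Y unfolding step_exits_def by auto
    qed
  qed (use X Y disj in \<open>auto simp: step_exits_def\<close>)
  moreover have "step_exits a A X \<inter> step_exits a B Y = {}"
    using dXY unfolding step_exits_def by auto
  moreover have "finite (step_exits a A X)" "finite (step_exits a B Y)"
    using fX fY unfolding step_exits_def by auto
  ultimately show ?thesis
    unfolding chain_weight_def using fX fY dXY
    by (simp add: prod.union_disjoint card_Un_disjoint power_add algebra_simps)
qed

lemma chain_total_Un:
  assumes fA: "finite A" and fB: "finite B" and disj: "A \<inter> B = {}"
    and closedA: "\<And>y. y \<in> A \<Longrightarrow> y + a \<in> A \<union> B \<Longrightarrow> y + a \<in> A"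
    and closedB: "\<And>y. y \<in> B \<Longrightarrow> y + a \<in> A \<union> B \<Longrightarrow> y + a \<in> B"
  shows "chain_total a l (A \<union> B) = chain_total a l A * chain_total a l B"
proof -
  have img: "Pow (A \<union> B) = (\<lambda>(X, Y). X \<union> Y) ` (Pow A \<times> Pow B)"
  proof (intro equalityI subsetI)
    fix C assume "C \<in> Pow (A \<union> B)"
    then have "C = (C \<inter> A) \<union> (C \<inter> B)" "(C \<inter> A, C \<inter> B) \<in> Pow A \<times> Pow B" by auto
    then show "C \<in> (\<lambda>(X, Y). X \<union> Y) ` (Pow A \<times> Pow B)" by (metis case_prod_conv image_eqI)
  qed auto
  have inj: "inj_on (\<lambda>(X, Y). X \<union> Y) (Pow A \<times> Pow B)"
  proof (rule inj_onI, clarify)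
    fix X Y X' Y' assume "X \<subseteq> A" "Y \<subseteq> B" "X' \<subseteq> A" "Y' \<subseteq> B" "X \<union> Y = X' \<union> Y'"
    then show "X = X' \<and> Y = Y'" using disj by blast
  qed
  have "chain_total a l (A \<union> B) =
        (\<Sum>Z\<in>Pow A \<times> Pow B. chain_weight a l (A \<union> B) ((\<lambda>(X, Y). X \<union> Y) Z))"
    unfolding chain_total_def img by (rule sum.reindex[OF inj, unfolded comp_def])
  also have "\<dots> = (\<Sum>(X, Y)\<in>Pow A \<times> Pow B. chain_weight a l A X * chain_weight a l B Y)"
    by (rule sum.cong[OF refl]) (auto intro!: chain_weight_Un[OF assms])
  also have "\<dots> = chain_total a l A * chain_total a l B"
    unfolding chain_total_def by (simp add: sum_product sum.cartesian_product)
  finally show ?thesis .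
qed

lemma chain_weight_insert_top:
  assumes fV: "finite V" and eV: "\<And>y. y \<in> V \<Longrightarrow> y < e"
    and pred: "V \<noteq> {} \<Longrightarrow> Max V + a = e" and "a \<ge> 1" and C: "C \<subseteq> V"
  shows "chain_weight a l (insert e V) C =
      (if Max V \<in> C then chain_weight a l V C / 2 else chain_weight a l V C)"
    and "chain_weight a l (insert e V) (insert e C) = (real (l e) / 2) * chain_weight a l V C"
proof -
  have e_notin: "e \<notin> V" using eV by blast
  have "step_exits a (insert e V) C =
      (if Max V \<in> C then insert (Max V) (step_exits a V C) else step_exits a V C)"
  proof (cases "Max V \<in> C")
    case True
    then have "Max V + a = e" using C pred by auto
    then show ?thesis using True C e_notin unfolding step_exits_def by auto
  next
    case False
    have "y + a \<noteq> e" if "y \<in> C" for y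
    proof
      assume "y + a = e"
      moreover have "V \<noteq> {}" using C that by auto
      ultimately have "y = Max V" using pred by simp
      then show False using False that by simp
    qed
    then show ?thesis using False unfolding step_exits_def by auto
  qed
  moreover have "Max V \<notin> step_exits a V C" if "Max V \<in> C"
    using that C pred e_notin unfolding step_exits_def by auto
  moreover have fin: "finite (step_exits a V C)"
    using C fV unfolding step_exits_def by (auto intro: finite_subset)
  ultimately show "chain_weight a l (insert e V) C =
      (if Max V \<in> C then chain_weight a l V C / 2 else chain_weight a l V C)"
    unfolding chain_weight_def by simp
  have "step_exits a (insert e V) (insert e C) = step_exits a V C"
    using C e_notin eV[of "e + a"] \<open>a \<ge> 1\<close> unfolding step_exits_def by auto
  moreover have "finite C" "e \<notin> C" using C fV e_notin finite_subset by auto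
  ultimately show "chain_weight a l (insert e V) (insert e C) = (real (l e) / 2) * chain_weight a l V C"
    unfolding chain_weight_def by simp
qed

lemma chain_total_insert_top:
  assumes fV: "finite V" and eV: "\<And>y. y \<in> V \<Longrightarrow> y < e"
    and pred: "V \<noteq> {} \<Longrightarrow> Max V + a = e" and "a \<ge> 1"
  shows "chain_total a l (insert e V) =
           chain_total a l V - chain_total_at a l V (Max V) / 2 + (real (l e) / 2) * chain_total a l V"
    and "chain_total_at a l (insert e V) e = (real (l e) / 2) * chain_total a l V"
proof -
  note weight = chain_weight_insert_top[OF assms]
  have e_notin: "e \<notin> V" using eV by blast
  have inj: "inj_on (insert e) (Pow V)"
    using e_notin by (intro inj_onI) (metis Diff_insert_absorb PowD subsetD)
  have sum_with_e: "(\<Sum>C\<in>insert e ` Pow V. chain_weight a l (insert e V) C) =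
      (real (l e) / 2) * chain_total a l V"
    unfolding chain_total_def sum.reindex[OF inj] comp_def sum_distrib_left
    by (rule sum.cong[OF refl]) (simp add: weight(2))
  have "(\<Sum>C\<in>Pow V. chain_weight a l (insert e V) C) =
        (\<Sum>C\<in>Pow V. chain_weight a l V C - (if Max V \<in> C then chain_weight a l V C / 2 else 0))"
    by (rule sum.cong[OF refl]) (simp add: weight(1))
  also have "\<dots> = chain_total a l V - chain_total_at a l V (Max V) / 2"
    unfolding chain_total_def chain_total_at_def using fV
    by (simp add: sum_subtractf sum.inter_filter[symmetric] sum_divide_distrib)
  finally have sum_without_e: "(\<Sum>C\<in>Pow V. chain_weight a l (insert e V) C) =
      chain_total a l V - chain_total_at a l V (Max V) / 2" .
  have "Pow V \<inter> insert e ` Pow V = {}" using e_notin by auto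
  then show "chain_total a l (insert e V) =
      chain_total a l V - chain_total_at a l V (Max V) / 2 + (real (l e) / 2) * chain_total a l V"
    unfolding chain_total_def Pow_insert
    using fV sum_with_e sum_without_e by (subst sum.union_disjoint) (auto simp: chain_total_def)
  have "{C \<in> Pow (insert e V). e \<in> C} = insert e ` Pow V" using e_notin by (auto simp: Pow_insert)
  then show "chain_total_at a l (insert e V) e = (real (l e) / 2) * chain_total a l V"
    unfolding chain_total_at_def using sum_with_e by simp
qed

lemma affine_le_geometric:
  fixes a b c r :: real
  assumes start: "a + b * real s \<le> c * r ^ s" and r: "r \<ge> 1" and b: "b \<ge> 0"
    and growth: "b \<le> (r - 1) * (a + b * real s)" and "s \<le> n"
  shows "a + b * real n \<le> c * r ^ n"
  using \<open>s \<le> n\<close>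
proof (induction n rule: dec_induct)
  case base
  then show ?case by (rule start)
next
  case (step n)
  have "b * real s \<le> b * real n"
    using step.hyps(1) b by (intro mult_left_mono) auto
  then have "(r - 1) * (a + b * real s) \<le> (r - 1) * (a + b * real n)"
    using r by (intro mult_left_mono) auto
  then have "a + b * real (Suc n) \<le> r * (a + b * real n)"
    using growth by (simp add: algebra_simps)
  also have "\<dots> \<le> r * (c * r ^ n)"
    using step.IH r by (intro mult_left_mono) auto
  finally show ?case by (simp add: mult_ac)
qed

text \<open>Both sides are affine in \<open>(T, I)\<close> with \<open>0 \<le> I \<le> T\<close>, so it suffices to compare
  them at \<open>I = 0\<close> and \<open>I = T\<close>.\<close>
lemma chain_invariant_step:
  fixes T I :: real
  assumes L: "L \<ge> 1" and I: "0 \<le> I" "I \<le> T" and inv: "T - I / 3 \<le> (7/5) ^ n"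
  shows "(T - I / 2 + (real L / 2) * T) - ((real L / 2) * T) / 3 \<le> (7/5) ^ (L + n)"
    and "T - I / 2 + (real L / 2) * T \<le> (7/5) ^ (L + n + 1)"
proof -
  let ?g = "7/5 :: real"
  have g1: "1 + 1/3 * real L \<le> 1 * ?g ^ L"
    by (rule affine_le_geometric[where s = 1, OF _ _ _ _ L]) simp_all
  have g2: "1/2 + 1/3 * real L \<le> 2/3 * ?g ^ L"
    by (rule affine_le_geometric[where s = 1, OF _ _ _ _ L]) simp_all
  have g3: "1 + 1/2 * real L \<le> ?g * ?g ^ L"
    by (rule affine_le_geometric[where s = 1, OF _ _ _ _ L]) simp_all
  have g4: "1/2 + 1/2 * real L \<le> (2/3 * ?g) * ?g ^ L"
  proof (cases "L = 1")
    case False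
    then have "2 \<le> L" using L by simp
    then show ?thesis
      by (rule affine_le_geometric[where s = 2, rotated 4]) (simp_all add: power2_eq_square)
  qed simp
  have TI: "T - I \<ge> 0" using I by simp
  have "(T - I / 2 + (real L / 2) * T) - ((real L / 2) * T) / 3 =
        (1 + 1/3 * real L) * (T - I) + (1/2 + 1/3 * real L) * I"
    by (simp add: field_simps)
  also have "\<dots> \<le> ?g ^ L * (T - I) + (2/3 * ?g ^ L) * I"
    using g1 g2 TI I(1) by (intro add_mono mult_right_mono) auto
  also have "\<dots> = ?g ^ L * (T - I / 3)"
    by (simp add: field_simps)
  also have "\<dots> \<le> ?g ^ L * ?g ^ n"
    using inv by (intro mult_left_mono) auto
  finally show "(T - I / 2 + (real L / 2) * T) - ((real L / 2) * T) / 3 \<le> ?g ^ (L + n)"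
    by (simp add: power_add)
  have "T - I / 2 + (real L / 2) * T = (1 + 1/2 * real L) * (T - I) + (1/2 + 1/2 * real L) * I"
    by (simp add: field_simps)
  also have "\<dots> \<le> (?g * ?g ^ L) * (T - I) + ((2/3 * ?g) * ?g ^ L) * I"
    using g3 g4 TI I(1) by (intro add_mono mult_right_mono) auto
  also have "\<dots> = (?g * ?g ^ L) * (T - I / 3)"
    by (simp add: field_simps)
  also have "\<dots> \<le> (?g * ?g ^ L) * ?g ^ n"
    using inv by (intro mult_left_mono) auto
  finally show "T - I / 2 + (real L / 2) * T \<le> ?g ^ (L + n + 1)"
    by (simp add: power_add mult_ac)
qed

lemma mod_eq_less_imp_add_le:
  fixes x y m :: nat
  assumes "x mod m = y mod m" "x < y"
  shows "x + m \<le> y"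
proof -
  obtain k where k: "y - x = m * k"
    using assms mod_eq_dvd_iff_nat[of x y m] by auto
  then have "k \<noteq> 0" using assms(2) by (metis diff_is_0_eq leD mult_0_right)
  then have "m \<le> m * k" by simp
  then show ?thesis using k assms(2) by linarith
qed

definition residue_class_below :: "nat \<Rightarrow> nat \<Rightarrow> nat \<Rightarrow> nat \<Rightarrow> nat set" where
  "residue_class_below s a j e = {p\<in>{s..<e}. p mod a = j}"

lemma residue_class_below_Max:
  assumes a: "a \<ge> 1" and e: "s \<le> e" "e mod a = j"
    and ne: "residue_class_below s a j e \<noteq> {}"
  shows "Max (residue_class_below s a j e) + a = e"
proof -
  let ?V = "residue_class_below s a j e"
  have fV: "finite ?V" unfolding residue_class_below_def by auto
  have M: "Max ?V \<in> ?V" using Max_in[OF fV ne] .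
  then have le: "Max ?V + a \<le> e"
    using e by (intro mod_eq_less_imp_add_le) (auto simp: residue_class_below_def)
  then have "(e - a) mod a = j" using e by (metis le_add_diff_inverse2 mod_add_self2 le_add2 order_trans)
  then have "e - a \<in> ?V" using le M a unfolding residue_class_below_def by auto
  then show ?thesis using Max_ge[OF fV] le by fastforce
qed

lemma chain_total_residue_class:
  assumes a: "a \<ge> 1" and l: "\<And>p. l p \<ge> 1" and K: "K = residue_class_below s a j e"
  shows "chain_total a l K - chain_total_at a l K (Max K) / 3 \<le> (7/5) ^ (\<Sum>p\<in>K. l p) \<and>
    chain_total a l K \<le> (7/5) ^ ((\<Sum>p\<in>K. l p) + 1)"
  using K
proof (induction e arbitrary: K)
  case 0
  then have "K = {}" unfolding residue_class_below_def by auto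
  then show ?case by (simp add: chain_total_empty chain_total_at_empty)
next
  case (Suc e)
  let ?V = "residue_class_below s a j e"
  have fV: "finite ?V" unfolding residue_class_below_def by auto
  show ?case
  proof (cases "s \<le> e \<and> e mod a = j")
    case False
    then have "K = ?V" using Suc.prems unfolding residue_class_below_def by (auto simp: less_Suc_eq)
    then show ?thesis using Suc.IH by blast
  next
    case True
    have K: "K = insert e ?V" using Suc.prems True unfolding residue_class_below_def by auto
    have below: "\<And>y. y \<in> ?V \<Longrightarrow> y < e" unfolding residue_class_below_def by auto
    have pred: "Max ?V + a = e" if "?V \<noteq> {}"
      using residue_class_below_Max[OF a _ _ that] True by blast
    have "e \<notin> ?V" using below by blast
    then have sum: "(\<Sum>p\<in>insert e ?V. l p) = l e + (\<Sum>p\<in>?V. l p)" using fV by simp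
    have Max: "Max (insert e ?V) = e" using below fV by (intro Max_eqI) (auto simp: less_imp_le)
    have IH: "chain_total a l ?V - chain_total_at a l ?V (Max ?V) / 3 \<le> (7/5) ^ (\<Sum>p\<in>?V. l p)"
      using Suc.IH by blast
    note insert_top = chain_total_insert_top[OF fV below pred a, of l]
    have "chain_total a l K = chain_total a l ?V - chain_total_at a l ?V (Max ?V) / 2 +
        (real (l e) / 2) * chain_total a l ?V"
      and "chain_total_at a l K (Max K) = (real (l e) / 2) * chain_total a l ?V"
      using insert_top unfolding K Max by simp_all
    then show ?thesis
      using chain_invariant_step[OF l[of e] chain_total_at_nonneg chain_total_at_le[OF fV] IH]
      unfolding K sum by simp
  qed
qed

lemma chain_total_interval_le:
  assumes a: "a \<ge> 1" and l: "\<And>p. l p \<ge> 1"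
  shows "chain_total a l {s..<e} \<le> (7/5) ^ ((\<Sum>p\<in>{s..<e}. l p) + a)"
proof -
  define U where "U J = {p\<in>{s..<e}. p mod a < J}" for J
  have "chain_total a l (U J) \<le> (7/5) ^ ((\<Sum>p\<in>U J. l p) + J)" for J
  proof (induction J)
    case 0
    have "U 0 = {}" unfolding U_def by auto
    then show ?case by (simp add: chain_total_empty)
  next
    case (Suc J)
    let ?K = "residue_class_below s a J e"
    have U: "U (Suc J) = U J \<union> ?K" and disj: "U J \<inter> ?K = {}"
      and fin: "finite (U J)" "finite ?K"
      unfolding U_def residue_class_below_def by auto
    have "chain_total a l (U (Suc J)) = chain_total a l (U J) * chain_total a l ?K"
      unfolding U by (rule chain_total_Un[OF fin disj]) (auto simp: U_def residue_class_below_def)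
    also have "\<dots> \<le> (7/5) ^ ((\<Sum>p\<in>U J. l p) + J) * (7/5) ^ ((\<Sum>p\<in>?K. l p) + 1)"
      using chain_total_residue_class[where s = s and j = J and e = e and K = ?K, OF a l refl] Suc.IH
      by (intro mult_mono) (auto simp: chain_total_nonneg)
    also have "\<dots> = (7/5) ^ ((\<Sum>p\<in>U (Suc J). l p) + Suc J)"
      unfolding U sum.union_disjoint[OF fin disj] by (simp add: power_add)
    finally show ?case .
  qed
  moreover have "U a = {s..<e}" unfolding U_def using a by auto
  ultimately show ?thesis by metis
qed

section \<open>An exponential bound for the prefix sums\<close>

lemma prefix_add_mult:
  assumes Q: "Q \<in> prefixes f m" and mf: "2 * m < f" and y: "y \<in> Q" and lt: "y + k * m < f - m"
  shows "y + k * m \<in> Q"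
  using lt
proof (induction k)
  case (Suc k)
  then have "y + k * m \<in> Q" "(y + k * m) + m < f - m" by simp_all
  then have "(y + k * m) + m \<in> Q" using prefix_props(1,4)[OF Q mf] by blast
  then show ?case by (simp add: algebra_simps)
qed (use y in simp)

definition residue_range :: "nat \<Rightarrow> nat \<Rightarrow> nat \<Rightarrow> nat set" where
  "residue_range m a p = {x. m + a \<le> x \<and> x \<le> p \<and> x mod m = p mod m}"

definition window :: "nat \<Rightarrow> nat \<Rightarrow> nat \<Rightarrow> nat set" where
  "window f m a = {max (f - 2 * m + 1) (m + a)..<f - m}"

definition rebuild :: "nat \<Rightarrow> nat \<Rightarrow> nat set \<Rightarrow> (nat \<Rightarrow> nat) \<Rightarrow> nat set" where
  "rebuild f m C g = {x\<in>{m..<f - m}. m dvd x} \<union> {x. \<exists>p\<in>C. x mod m = p mod m \<and> g p \<le> x \<and> x \<le> p}"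

definition gap_prefixes :: "nat \<Rightarrow> nat \<Rightarrow> nat \<Rightarrow> nat set set" where
  "gap_prefixes f m a = {Q\<in>prefixes f m. Q \<noteq> {m} \<and> Min (Q - {m}) = m + a}"

definition class_min :: "nat \<Rightarrow> nat \<Rightarrow> nat set \<Rightarrow> nat \<Rightarrow> nat" where
  "class_min m a Q p = Min {x\<in>Q. m + a \<le> x \<and> x mod m = p mod m}"

lemma window_props: "p \<in> window f m a \<Longrightarrow> f - 2 * m < p \<and> p < f - m \<and> m + a \<le> p"
  unfolding window_def by auto

lemma finite_window: "finite (window f m a)"
  unfolding window_def by simp

lemma finite_residue_range: "finite (residue_range m a p)"
  unfolding residue_range_def by auto

context
  fixes f m a :: nat
  assumes mf: "2 * m < f" and a: "a \<ge> 1"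
begin

lemma gap_prefix_props:
  assumes Q: "Q \<in> gap_prefixes f m a"
  shows "Q \<in> prefixes f m" and "m + a \<in> Q" and "\<And>x. x \<in> Q \<Longrightarrow> x \<noteq> m \<Longrightarrow> m + a \<le> x"
    and "finite Q"
proof -
  show Q': "Q \<in> prefixes f m" using Q unfolding gap_prefixes_def by auto
  show fin: "finite Q" using prefix_props(2)[OF Q' mf] finite_subset by blast
  have "Q - {m} \<noteq> {}" and min: "Min (Q - {m}) = m + a"
    using Q prefix_props(1)[OF Q' mf] unfolding gap_prefixes_def by auto
  then show "m + a \<in> Q" "\<And>x. x \<in> Q \<Longrightarrow> x \<noteq> m \<Longrightarrow> m + a \<le> x"
    using Min_in[of "Q - {m}"] Min_le[of "Q - {m}"] fin by auto
qed

text \<open>The translates by \<open>m\<close> of the elements in the window, and the translates by \<open>m + a\<close> of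
  its exits, are disjoint sets of forced sums.\<close>
lemma card_window_le_forced_sums:
  assumes Q: "Q \<in> gap_prefixes f m a"
  defines "C \<equiv> Q \<inter> window f m a"
  shows "card C + card (step_exits a (window f m a) C) \<le> card (forced_sums f m Q)"
proof -
  note qp = prefix_props[OF gap_prefix_props(1)[OF Q] mf] and qa = gap_prefix_props[OF Q]
  let ?E = "step_exits a (window f m a) C"
  have "(+) m ` C \<subseteq> forced_sums f m Q"
  proof
    fix z assume "z \<in> (+) m ` C"
    then obtain y where "y \<in> Q" "y \<in> window f m a" "z = m + y" unfolding C_def by auto
    then show "z \<in> forced_sums f m Q"
      using window_props qp(1) mf unfolding forced_sums_def sumset_def by force
  qed
  moreover have "(+) (m + a) ` ?E \<subseteq> forced_sums f m Q"
  proof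
    fix z assume "z \<in> (+) (m + a) ` ?E"
    then obtain y where "y \<in> Q" "y + a \<in> window f m a" "z = (m + a) + y"
      unfolding step_exits_def C_def by auto
    then show "z \<in> forced_sums f m Q"
      using window_props qa(2) mf unfolding forced_sums_def sumset_def by force
  qed
  moreover have "(+) m ` C \<inter> (+) (m + a) ` ?E = {}"
    unfolding step_exits_def by (auto simp: add.commute)
  moreover have "finite C" "finite ?E"
    using qa(4) unfolding C_def step_exits_def by auto
  ultimately have "card ((+) m ` C) + card ((+) (m + a) ` ?E) = card ((+) m ` C \<union> (+) (m + a) ` ?E)"
    by (simp add: card_Un_disjoint)
  also have "\<dots> \<le> card (forced_sums f m Q)"
    using \<open>(+) m ` C \<subseteq> _\<close> \<open>(+) (m + a) ` ?E \<subseteq> _\<close>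
    by (intro card_mono) (auto simp: forced_sums_def)
  finally show ?thesis by (simp add: card_image)
qed

lemma class_min_props:
  assumes Q: "Q \<in> gap_prefixes f m a" and p: "p \<in> Q" "m + a \<le> p"
  shows "class_min m a Q p \<in> Q" and "class_min m a Q p \<in> residue_range m a p"
proof -
  let ?S = "{x\<in>Q. m + a \<le> x \<and> x mod m = p mod m}"
  have "finite ?S" "p \<in> ?S" using gap_prefix_props(4)[OF Q] p by auto
  then have "class_min m a Q p \<in> ?S" "class_min m a Q p \<le> p"
    unfolding class_min_def using Min_in Min_le by blast+
  then show "class_min m a Q p \<in> Q" "class_min m a Q p \<in> residue_range m a p"
    unfolding residue_range_def by auto
qed

lemma gap_prefix_lift_to_window:
  assumes Q: "Q \<in> gap_prefixes f m a" and x: "x \<in> Q" "m + a \<le> x"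
  shows "\<exists>p\<in>Q \<inter> window f m a. p mod m = x mod m \<and> x \<le> p"
proof -
  have Q': "Q \<in> prefixes f m" by (rule gap_prefix_props(1)[OF Q])
  note qp = prefix_props[OF Q' mf]
  have xr: "x < f - m" using qp(2) x by auto
  define q where "q = (f - m - 1 - x) div m"
  define p where "p = x + q * m"
  have "q * m \<le> f - m - 1 - x"
    unfolding q_def by (rule div_times_less_eq_dividend)
  moreover have "f - m - 1 - x < m + q * m"
    unfolding q_def using dividend_less_times_div[of m "f - m - 1 - x"] qp(3)
    by (simp add: mult.commute)
  ultimately have "p < f - m" "f - 2 * m \<le> p"
    unfolding p_def using xr by arith+
  moreover have pQ: "p \<in> Q"
    unfolding p_def by (rule prefix_add_mult[OF Q' mf x(1)]) (use \<open>p < f - m\<close> p_def in simp)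
  moreover have "p \<noteq> f - 2 * m" using qp(6)[OF pQ] mf by auto
  ultimately have "p \<in> Q \<inter> window f m a" using x(2) unfolding window_def p_def by auto
  moreover have "p mod m = x mod m" "x \<le> p" unfolding p_def by simp_all
  ultimately show ?thesis by blast
qed

lemma rebuild_subset_gap_prefix:
  assumes Q: "Q \<in> gap_prefixes f m a"
  shows "rebuild f m (Q \<inter> window f m a) (class_min m a Q) \<subseteq> Q"
proof
  have Q': "Q \<in> prefixes f m" by (rule gap_prefix_props(1)[OF Q])
  note qp = prefix_props[OF Q' mf]
  fix x assume x: "x \<in> rebuild f m (Q \<inter> window f m a) (class_min m a Q)"
  show "x \<in> Q"
  proof (cases "x \<in> {m..<f - m} \<and> m dvd x")
    case True
    then obtain k where k: "x = m * k" by auto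
    then have "k \<noteq> 0" using True qp(3) by (auto intro: ccontr)
    then have "x = m + (k - 1) * m" using k by (cases k) (auto simp: algebra_simps)
    then show ?thesis using prefix_add_mult[OF Q' mf qp(1), of "k - 1"] True by auto
  next
    case False
    then obtain p where p: "p \<in> Q" "p \<in> window f m a" "x mod m = p mod m"
        "class_min m a Q p \<le> x" "x \<le> p"
      using x unfolding rebuild_def by auto
    have pa: "m + a \<le> p" using window_props p(2) by auto
    note cm = class_min_props[OF Q p(1) pa]
    have "class_min m a Q p mod m = x mod m" using cm(2) p(3) unfolding residue_range_def by auto
    then obtain k where "x = class_min m a Q p + k * m"
      using p(4) mod_eq_dvd_iff_nat[of "class_min m a Q p" x m]
      by (metis dvd_def le_add_diff_inverse mult.commute)
    moreover have "x < f - m" using p(5) window_props[OF p(2)] by linarith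
    ultimately show ?thesis using prefix_add_mult[OF Q' mf cm(1)] by simp
  qed
qed

text \<open>Pushing an element up by multiples of \<open>m\<close> stays inside the prefix until it enters the
  window, so the prefix is determined by its part in the window and the least element of each
  residue class above \<open>m + a\<close>.\<close>
lemma gap_prefix_eq_rebuild:
  assumes Q: "Q \<in> gap_prefixes f m a"
  shows "Q = rebuild f m (Q \<inter> window f m a) (class_min m a Q)"
proof
  note qp = prefix_props[OF gap_prefix_props(1)[OF Q] mf] and qa = gap_prefix_props[OF Q]
  show "Q \<subseteq> rebuild f m (Q \<inter> window f m a) (class_min m a Q)"
  proof
    fix x assume x: "x \<in> Q"
    show "x \<in> rebuild f m (Q \<inter> window f m a) (class_min m a Q)"
    proof (cases "m dvd x")
      case True
      then show ?thesis unfolding rebuild_def using qp(2) x by auto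
    next
      case False
      then have xa: "m + a \<le> x" using qa(3) x by fastforce
      then obtain p where p: "p \<in> Q \<inter> window f m a" "p mod m = x mod m" "x \<le> p"
        using gap_prefix_lift_to_window[OF Q x] by blast
      moreover have "class_min m a Q p \<le> x"
        unfolding class_min_def using qa(4) x xa p(2) by (intro Min_le) auto
      ultimately show ?thesis unfolding rebuild_def by auto
    qed
  qed
qed (rule rebuild_subset_gap_prefix[OF Q])

lemma card_gap_prefixes_window_le:
  assumes C: "C \<subseteq> window f m a"
  shows "card {Q\<in>gap_prefixes f m a. Q \<inter> window f m a = C} \<le> (\<Prod>p\<in>C. card (residue_range m a p))"
proof -
  let ?F = "{Q\<in>gap_prefixes f m a. Q \<inter> window f m a = C}"
  let ?h = "\<lambda>Q. restrict (class_min m a Q) C"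
  have fC: "finite C" using C finite_window finite_subset by blast
  have rebuild: "Q = rebuild f m C (class_min m a Q)" if "Q \<in> ?F" for Q
  proof -
    from that have "Q \<in> gap_prefixes f m a" "Q \<inter> window f m a = C" by auto
    from gap_prefix_eq_rebuild[OF this(1)] show ?thesis unfolding \<open>Q \<inter> window f m a = C\<close> .
  qed
  have inj: "inj_on ?h ?F"
  proof (rule inj_onI)
    fix Q1 Q2 assume Q1: "Q1 \<in> ?F" and Q2: "Q2 \<in> ?F" and eq: "?h Q1 = ?h Q2"
    have "\<forall>p\<in>C. class_min m a Q1 p = class_min m a Q2 p"
    proof
      fix p assume "p \<in> C"
      then show "class_min m a Q1 p = class_min m a Q2 p" using fun_cong[OF eq, of p] by simp
    qed
    have "Q1 = rebuild f m C (class_min m a Q1)" by (rule rebuild[OF Q1])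
    also have "\<dots> = rebuild f m C (class_min m a Q2)"
      using \<open>\<forall>p\<in>C. _\<close> unfolding rebuild_def by auto
    also have "\<dots> = Q2" by (rule rebuild[OF Q2, symmetric])
    finally show "Q1 = Q2" .
  qed
  have sub: "?h ` ?F \<subseteq> PiE C (residue_range m a)"
  proof
    fix g assume "g \<in> ?h ` ?F"
    then obtain Q where Q: "Q \<in> gap_prefixes f m a" "Q \<inter> window f m a = C" and g: "g = ?h Q"
      by auto
    have "class_min m a Q p \<in> residue_range m a p" if "p \<in> C" for p
    proof -
      have "p \<in> Q" "m + a \<le> p" using that Q(2) window_props[of p f m a] by auto
      then show ?thesis by (rule class_min_props(2)[OF Q(1)])
    qed
    then show "g \<in> PiE C (residue_range m a)" unfolding g by auto
  qed
  have "card ?F = card (?h ` ?F)" by (rule card_image[OF inj, symmetric])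
  also have "\<dots> \<le> card (PiE C (residue_range m a))"
    using sub by (intro card_mono finite_PiE fC finite_residue_range)
  finally show ?thesis by (simp add: card_PiE[OF fC])
qed

text \<open>The ranges belong to different residue classes because the window is shorter than
  \<open>m\<close>, so they are disjoint subsets of \<open>{m + a..<f - m}\<close>.\<close>
lemma sum_card_residue_range_le:
  "(\<Sum>p\<in>window f m a. card (residue_range m a p)) \<le> f - 2 * m - a"
proof -
  have disj: "residue_range m a p \<inter> residue_range m a q = {}"
    if "p \<in> window f m a" "q \<in> window f m a" "p < q" for p q
  proof (rule ccontr)
    assume "residue_range m a p \<inter> residue_range m a q \<noteq> {}"
    then have "p mod m = q mod m" unfolding residue_range_def by auto
    then have "p + m \<le> q" using mod_eq_less_imp_add_le that(3) by blast
    then show False using window_props[OF that(1)] window_props[OF that(2)] mf by linarith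
  qed
  then have "residue_range m a p \<inter> residue_range m a q = {}"
    if "p \<in> window f m a" "q \<in> window f m a" "p \<noteq> q" for p q
    using that by (metis inf_commute linorder_neqE_nat)
  then have "(\<Sum>p\<in>window f m a. card (residue_range m a p)) = card (\<Union>p\<in>window f m a. residue_range m a p)"
    by (intro card_UN_disjoint[symmetric] finite_window finite_residue_range ballI impI)
  also have "\<dots> \<le> card {m + a..<f - m}"
    by (rule card_mono) (auto simp: residue_range_def window_def)
  finally show ?thesis by simp
qed

lemma sum_gap_prefixes_le:
  assumes at: "a < f - 2 * m"
  shows "(\<Sum>Q\<in>gap_prefixes f m a. (1/2::real) ^ card (forced_sums f m Q)) \<le> (7/5) ^ (f - 2 * m)"
proof -
  let ?W = "window f m a"
  let ?l = "\<lambda>p. max 1 (card (residue_range m a p))"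
  let ?w = "\<lambda>C. (1/2::real) ^ (card C + card (step_exits a ?W C))"
  let ?h = "\<lambda>Q. Q \<inter> ?W"
  have fin: "finite (gap_prefixes f m a)"
    using finite_prefixes unfolding gap_prefixes_def by auto
  have "(\<Sum>Q\<in>gap_prefixes f m a. (1/2::real) ^ card (forced_sums f m Q)) \<le>
        (\<Sum>Q\<in>gap_prefixes f m a. ?w (?h Q))"
    using card_window_le_forced_sums by (intro sum_mono power_decreasing) auto
  also have "\<dots> = (\<Sum>C\<in>?h ` gap_prefixes f m a. \<Sum>Q\<in>{Q\<in>gap_prefixes f m a. ?h Q = C}. ?w (?h Q))"
    by (rule sum.group[OF fin finite_imageI[OF fin] subset_refl, symmetric])
  also have "\<dots> = (\<Sum>C\<in>?h ` gap_prefixes f m a. real (card {Q\<in>gap_prefixes f m a. ?h Q = C}) * ?w C)"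
    by (rule sum.cong[OF refl]) simp
  also have "\<dots> \<le> (\<Sum>C\<in>?h ` gap_prefixes f m a. (\<Prod>p\<in>C. real (?l p)) * ?w C)"
  proof (intro sum_mono mult_right_mono)
    fix C assume "C \<in> ?h ` gap_prefixes f m a"
    then have "real (card {Q\<in>gap_prefixes f m a. ?h Q = C}) \<le> (\<Prod>p\<in>C. real (card (residue_range m a p)))"
      using card_gap_prefixes_window_le[of C] by (auto simp flip: of_nat_prod)
    also have "\<dots> \<le> (\<Prod>p\<in>C. real (?l p))" by (intro prod_mono) auto
    finally show "real (card {Q\<in>gap_prefixes f m a. ?h Q = C}) \<le> (\<Prod>p\<in>C. real (?l p))" .
  qed simp
  also have "\<dots> \<le> chain_total a ?l ?W"
    unfolding chain_total_def chain_weight_def using finite_window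
    by (intro sum_mono2) (auto intro!: mult_nonneg_nonneg prod_nonneg)
  also have "\<dots> \<le> (7/5) ^ ((\<Sum>p\<in>?W. ?l p) + a)"
    unfolding window_def by (rule chain_total_interval_le[OF a]) simp
  also have "(\<Sum>p\<in>?W. ?l p) = (\<Sum>p\<in>?W. card (residue_range m a p))"
  proof (rule sum.cong[OF refl])
    fix p assume "p \<in> ?W"
    then have "p \<in> residue_range m a p" using window_props unfolding residue_range_def by auto
    then have "card (residue_range m a p) \<ge> 1"
      using finite_residue_range card_0_eq by (metis empty_iff less_one not_le)
    then show "?l p = card (residue_range m a p)" by simp
  qed
  also have "(7/5::real) ^ ((\<Sum>p\<in>?W. card (residue_range m a p)) + a) \<le> (7/5) ^ (f - 2 * m)"
    using sum_card_residue_range_le at by (intro power_increasing) auto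
  finally show ?thesis .
qed

end

lemma sum_prefixes_le:
  assumes mf: "2 * m < f"
  shows "(\<Sum>Q\<in>prefixes f m. (1/2::real) ^ card (forced_sums f m Q)) \<le>
    1 + real (f - 2 * m) * (7/5) ^ (f - 2 * m)"
proof -
  let ?t = "f - 2 * m" and ?w = "\<lambda>Q. (1/2::real) ^ card (forced_sums f m Q)"
  let ?G = "\<Union>a\<in>{1..<?t}. gap_prefixes f m a"
  have "prefixes f m \<subseteq> insert {m} ?G"
  proof
    fix Q assume Q: "Q \<in> prefixes f m"
    show "Q \<in> insert {m} ?G"
    proof (cases "Q = {m}")
      case False
      note qp = prefix_props[OF Q mf]
      have "finite Q" using qp(2) finite_subset by blast
      moreover have "Q - {m} \<noteq> {}" using False qp(1) by auto
      ultimately have "Min (Q - {m}) \<in> Q - {m}" by (intro Min_in) auto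
      then have "m < Min (Q - {m})" "Min (Q - {m}) < f - m" using qp(2) by auto
      then have "Q \<in> gap_prefixes f m (Min (Q - {m}) - m)" "Min (Q - {m}) - m \<in> {1..<?t}"
        using Q False unfolding gap_prefixes_def by auto
      then show ?thesis by blast
    qed simp
  qed
  moreover have fin: "finite (gap_prefixes f m a)" for a
    using finite_prefixes unfolding gap_prefixes_def by auto
  ultimately have "(\<Sum>Q\<in>prefixes f m. ?w Q) \<le> (\<Sum>Q\<in>insert {m} ?G. ?w Q)"
    by (intro sum_mono2) auto
  also have "\<dots> \<le> ?w {m} + (\<Sum>Q\<in>?G. ?w Q)"
    using fin by (simp add: sum.insert_if)
  also have "(\<Sum>Q\<in>?G. ?w Q) = (\<Sum>a\<in>{1..<?t}. \<Sum>Q\<in>gap_prefixes f m a. ?w Q)"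
    by (rule sum.UNION_disjoint) (use fin in \<open>auto simp: gap_prefixes_def\<close>)
  also have "?w {m} + \<dots> \<le> 1 + (\<Sum>a\<in>{1..<?t}. (7/5::real) ^ ?t)"
    using sum_gap_prefixes_le[OF mf] by (intro add_mono sum_mono) (auto simp: power_le_one)
  also have "\<dots> \<le> 1 + real ?t * (7/5) ^ ?t"
    by simp
  finally show ?thesis .
qed

lemma count_mult_le:
  assumes "2 * m < f"
  shows "real (count_mult f m) \<le> 2 ^ (m - 1) * (1 + real (f - 2 * m) * (7/5) ^ (f - 2 * m))"
  unfolding count_mult_eq_sum_prefixes[OF assms]
  using sum_prefixes_le[OF assms] by (intro mult_left_mono) auto

section \<open>Convergence\<close>

text \<open>For \<open>f = 2 * k + e\<close>, multiplicities \<open>m \<le> k\<close> are indexed by \<open>j = k - m\<close> and those in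
  \<open>{k<..<f}\<close> by \<open>i = m - k - 1\<close>. Normalised by \<open>2 ^ k\<close>, each term converges as \<open>k \<rightarrow> \<infinity>\<close>.\<close>
definition low_term :: "nat \<Rightarrow> nat \<Rightarrow> nat \<Rightarrow> real" where
  "low_term e j k = (if j < k then real (count_mult (2 * k + e) (k - j)) / 2 ^ k else 0)"

definition high_term :: "nat \<Rightarrow> nat \<Rightarrow> nat \<Rightarrow> real" where
  "high_term e i k = (if i < k + e - 1 then real (count_mult (2 * k + e) (k + 1 + i)) / 2 ^ k else 0)"

lemma low_term_eq_psi:
  assumes e: "e \<le> 1" and jk: "3 * j + e < k"
  shows "low_term e j k = psi (2 * j + e) / 2 ^ (j + 1)"
proof (cases "2 * j + e = 0")
  case True
  then have "count_mult (2 * k + e) (k - j) = 0" by (intro count_mult_half) (use jk in auto)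
  then show ?thesis using True jk by (simp add: low_term_def psi_0)
next
  case False
  have "k = (k - j - 1) + (j + 1)" using jk by simp
  then have "2 ^ k = (2::real) ^ (k - j - 1) * 2 ^ (j + 1)" by (metis power_add)
  moreover have "2 * (k - j) < 2 * k + e" "2 * k + e < 3 * (k - j)" "2 * k + e - 2 * (k - j) = 2 * j + e"
    using False jk by auto
  then have "real (count_mult (2 * k + e) (k - j)) = 2 ^ (k - j - 1) * psi (2 * j + e)"
    using count_mult_eq_psi[of "k - j" "2 * k + e"] by simp
  ultimately show ?thesis using jk by (simp add: low_term_def)
qed

lemma high_term_eq:
  assumes e: "e \<le> 1" and ik: "i < k + e - 1"
  shows "high_term e i k = 2 ^ e / 2 ^ (i + 2)"
proof -
  have "count_mult (2 * k + e) (k + 1 + i) = 2 ^ (k + e - i - 2)"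
    using count_mult_above_half[of "2 * k + e" "k + 1 + i"] ik e by (simp add: algebra_simps)
  moreover have "(k + e - i - 2) + (i + 2) = k + e" using ik by simp
  then have "(2::real) ^ (k + e - i - 2) * 2 ^ (i + 2) = 2 ^ k * 2 ^ e" by (metis power_add)
  ultimately show ?thesis using ik by (simp add: high_term_def field_simps)
qed

lemma growth_le_geometric:
  assumes "e \<le> 1"
  shows "(1 + real (2 * j + e) * (7/5) ^ (2 * j + e)) / 2 ^ (j + 1) \<le> 2 * (real j + 1) * (49/50::real) ^ j"
proof -
  let ?G = "(7/5::real) ^ (2 * j + 1)"
  have "(7/5::real) ^ (2 * j + e) \<le> ?G" using assms by (intro power_increasing) auto
  moreover have "real (2 * j + e) \<le> 2 * real j + 1" using assms by simp
  ultimately have "1 + real (2 * j + e) * (7/5) ^ (2 * j + e) \<le> 1 + (2 * real j + 1) * ?G"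
    by (intro add_left_mono mult_mono) auto
  also have "\<dots> \<le> (2 * real j + 2) * ?G"
    using one_le_power[of "7/5::real" "2 * j + 1"] by (simp add: algebra_simps del: power_Suc)
  also have "?G = 7/5 * (2 ^ j * (49/50) ^ j)"
    by (simp add: power_add power_mult power2_eq_square flip: power_mult_distrib)
  finally have "1 + real (2 * j + e) * (7/5) ^ (2 * j + e) \<le>
      2 ^ (j + 1) * ((real j + 1) * 7/5 * (49/50) ^ j)"
    by (simp add: algebra_simps)
  then have "(1 + real (2 * j + e) * (7/5) ^ (2 * j + e)) / 2 ^ (j + 1) \<le>
      (real j + 1) * 7/5 * (49/50) ^ j"
    by (simp add: divide_le_eq mult.commute)
  also have "\<dots> \<le> 2 * (real j + 1) * (49/50) ^ j"
    by (intro mult_right_mono) auto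
  finally show ?thesis .
qed

lemma low_term_bound:
  assumes e: "e \<le> 1"
  shows "\<bar>low_term e j k\<bar> \<le> 2 * (real j + 1) * (49/50) ^ j"
proof (cases "j < k \<and> 2 * j + e \<noteq> 0")
  case True
  let ?m = "k - j"
  have "2 * ?m < 2 * k + e" "2 * k + e - 2 * ?m = 2 * j + e" using True by auto
  then have "real (count_mult (2 * k + e) ?m) \<le>
      2 ^ (?m - 1) * (1 + real (2 * j + e) * (7/5) ^ (2 * j + e))"
    using count_mult_le[of ?m "2 * k + e"] by simp
  moreover have "k = (?m - 1) + (j + 1)" using True by simp
  then have "2 ^ k = (2::real) ^ (?m - 1) * 2 ^ (j + 1)" by (metis power_add)
  ultimately have "low_term e j k \<le> (1 + real (2 * j + e) * (7/5) ^ (2 * j + e)) / 2 ^ (j + 1)"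
    using True by (simp add: low_term_def field_simps)
  moreover have "\<bar>low_term e j k\<bar> = low_term e j k" by (simp add: low_term_def)
  ultimately show ?thesis using growth_le_geometric[OF e, of j] by linarith
next
  case False
  then have "low_term e j k = 0"
    using count_mult_half[of "k - j" "2 * k + e"] by (auto simp: low_term_def)
  then show ?thesis by simp
qed

lemma high_term_bound:
  assumes e: "e \<le> 1"
  shows "\<bar>high_term e i k\<bar> \<le> 2 * (real i + 1) * (49/50) ^ i"
proof -
  have "\<bar>high_term e i k\<bar> \<le> 2 ^ e / 2 ^ (i + 2)"
    using high_term_eq[OF e, of i k] by (auto simp: high_term_def)
  also have "\<dots> \<le> 2 / 2 ^ (i + 2)"
    using e by (intro divide_right_mono) (auto simp: le_Suc_eq)
  also have "\<dots> \<le> (1/2) ^ i" by (simp add: power_one_over field_simps)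
  also have "\<dots> \<le> (49/50) ^ i" by (intro power_mono) auto
  also have "\<dots> \<le> 2 * (real i + 1) * (49/50) ^ i" by simp
  finally show ?thesis .
qed

lemma tendsto_low_term:
  assumes "e \<le> 1"
  shows "(\<lambda>k. low_term e j k) \<longlonglongrightarrow> psi (2 * j + e) / 2 ^ (j + 1)"
proof (rule tendsto_eventually)
  have "\<forall>k\<ge>3 * j + 2. low_term e j k = psi (2 * j + e) / 2 ^ (j + 1)"
    using assms by (intro allI impI low_term_eq_psi) auto
  then show "\<forall>\<^sub>F k in sequentially. low_term e j k = psi (2 * j + e) / 2 ^ (j + 1)"
    unfolding eventually_sequentially by blast
qed

lemma tendsto_high_term:
  assumes "e \<le> 1"
  shows "(\<lambda>k. high_term e i k) \<longlonglongrightarrow> 2 ^ e / 2 ^ (i + 2)"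
proof (rule tendsto_eventually)
  have "\<forall>k\<ge>i + 2. high_term e i k = 2 ^ e / 2 ^ (i + 2)"
    using assms by (intro allI impI high_term_eq) auto
  then show "\<forall>\<^sub>F k in sequentially. high_term e i k = 2 ^ e / 2 ^ (i + 2)"
    unfolding eventually_sequentially by blast
qed

lemma tendsto_suminf_dominated:
  fixes t :: "nat \<Rightarrow> nat \<Rightarrow> real"
  assumes "\<And>j. (\<lambda>k. t j k) \<longlonglongrightarrow> L j" and "\<And>j k. \<bar>t j k\<bar> \<le> M j" and "summable M"
  shows "summable L" and "(\<lambda>k. \<Sum>j. t j k) \<longlonglongrightarrow> (\<Sum>j. L j)"
proof -
  have "eventually (\<lambda>(j, k). norm (t j k) \<le> M j) (at_top \<times>\<^sub>F sequentially)"
    using assms(2) by (intro always_eventually) auto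
  from tannerys_theorem[OF assms(1) this assms(3)]
  have "summable (\<lambda>j. norm (L j))" "(\<lambda>k. \<Sum>j. t j k) \<longlonglongrightarrow> (\<Sum>j. L j)" by simp_all
  then show "summable L" and "(\<lambda>k. \<Sum>j. t j k) \<longlonglongrightarrow> (\<Sum>j. L j)"
    using summable_norm_cancel by blast+
qed

lemma tendsto_weighted_suminf:
  fixes t :: "nat \<Rightarrow> nat \<Rightarrow> real"
  assumes lim: "\<And>j. (\<lambda>k. t j k) \<longlonglongrightarrow> L j"
    and bound: "\<And>j k. \<bar>t j k\<bar> \<le> 2 * (real j + 1) * (49/50) ^ j"
    and w: "\<And>j. \<bar>w j\<bar> \<le> real j + 1"
  shows "summable (\<lambda>j. w j * L j)" and "(\<lambda>k. \<Sum>j. w j * t j k) \<longlonglongrightarrow> (\<Sum>j. w j * L j)"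
proof -
  have dominated: "\<bar>w j * t j k\<bar> \<le> (real j + 1) * (2 * (real j + 1) * (49/50) ^ j)" for j k
    unfolding abs_mult using w bound by (intro mult_mono) auto
  have summable: "summable (\<lambda>j. (real j + 1) * (2 * (real j + 1) * (49/50::real) ^ j))"
  proof (rule summable_comparison_test_bigo)
    show "summable (\<lambda>j. norm ((99/100::real) ^ j))" by simp
    show "(\<lambda>j. (real j + 1) * (2 * (real j + 1) * (49/50::real) ^ j)) \<in> O(\<lambda>j. (99/100) ^ j)"
      by real_asymp
  qed
  show "summable (\<lambda>j. w j * L j)" and "(\<lambda>k. \<Sum>j. w j * t j k) \<longlonglongrightarrow> (\<Sum>j. w j * L j)"
    using tendsto_suminf_dominated[where t = "\<lambda>j k. w j * t j k", OF tendsto_mult_left[OF lim]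
        dominated summable] by simp_all
qed

lemma sum_interval_by_offsets:
  fixes g :: "nat \<Rightarrow> real"
  assumes k: "k \<ge> 1" and e: "e \<le> 1"
  shows "(\<Sum>m = 1..2 * k + e + 1. g m) =
    (\<Sum>j<k. g (k - j)) + (\<Sum>i<k + e - 1. g (k + 1 + i)) + g (2 * k + e) + g (2 * k + e + 1)"
proof -
  let ?f = "2 * k + e"
  have "{1..?f + 1} = {1..<k + 1} \<union> {k + 1..<?f} \<union> {?f, ?f + 1}" using k by auto
  then have "(\<Sum>m = 1..?f + 1. g m) =
      (\<Sum>m\<in>{1..<k + 1}. g m) + (\<Sum>m\<in>{k + 1..<?f}. g m) + g ?f + g (?f + 1)"
    by (simp add: sum.union_disjoint ivl_disj_int_one(2))
  also have "(\<Sum>m\<in>{1..<k + 1}. g m) = (\<Sum>j<k. g (k - j))"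
    by (rule sum.reindex_bij_witness[where j = "\<lambda>m. k - m" and i = "\<lambda>j. k - j"]) auto
  also have "(\<Sum>m\<in>{k + 1..<?f}. g m) = (\<Sum>i<k + e - 1. g (k + 1 + i))"
    by (rule sum.reindex_bij_witness[where j = "\<lambda>m. m - (k + 1)" and i = "\<lambda>i. k + 1 + i"])
      (use k in auto)
  finally show ?thesis .
qed

lemma normalized_sum_by_offsets:
  fixes g wl wh :: "nat \<Rightarrow> real"
  assumes k: "k \<ge> 1" and e: "e \<le> 1"
    and wl: "\<And>j. j < k \<Longrightarrow> g (k - j) = wl j" and wh: "\<And>i. g (k + 1 + i) = wh i"
  shows "(\<Sum>P | admissible (2 * k + e) P. g (mult_of (2 * k + e) P)) / 2 ^ k =
    (\<Sum>j. wl j * low_term e j k) + (\<Sum>i. wh i * high_term e i k) + g (2 * k + e + 1) / 2 ^ k"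
proof -
  let ?f = "2 * k + e"
  let ?c = "\<lambda>m. g m * real (count_mult ?f m) / 2 ^ k"
  have "(\<Sum>P | admissible ?f P. g (mult_of ?f P)) = (\<Sum>m = 1..?f + 1. g m * real (count_mult ?f m))"
    using k by (intro sum_admissible_by_mult) simp
  then have "(\<Sum>P | admissible ?f P. g (mult_of ?f P)) / 2 ^ k = (\<Sum>m = 1..?f + 1. ?c m)"
    by (simp only: sum_divide_distrib)
  also have "\<dots> = (\<Sum>j<k. ?c (k - j)) + (\<Sum>i<k + e - 1. ?c (k + 1 + i)) + ?c ?f + ?c (?f + 1)"
    by (rule sum_interval_by_offsets[OF k e])
  also have "(\<Sum>j<k. ?c (k - j)) = (\<Sum>j. wl j * low_term e j k)"
  proof -
    have "(\<Sum>j<k. ?c (k - j)) = (\<Sum>j<k. wl j * low_term e j k)"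
      by (intro sum.cong) (auto simp: wl low_term_def)
    also have "\<dots> = (\<Sum>j. wl j * low_term e j k)"
      by (rule suminf_finite[symmetric]) (auto simp: low_term_def)
    finally show ?thesis .
  qed
  also have "(\<Sum>i<k + e - 1. ?c (k + 1 + i)) = (\<Sum>i. wh i * high_term e i k)"
  proof -
    have "(\<Sum>i<k + e - 1. ?c (k + 1 + i)) = (\<Sum>i<k + e - 1. wh i * high_term e i k)"
      by (intro sum.cong) (auto simp: wh[simplified] high_term_def)
    also have "\<dots> = (\<Sum>i. wh i * high_term e i k)"
      by (rule suminf_finite[symmetric]) (auto simp: high_term_def)
    finally show ?thesis .
  qed
  finally show ?thesis by (simp add: count_mult_self count_mult_Suc_self[simplified])
qed

lemma tendsto_normalized_sum:
  fixes g :: "nat \<Rightarrow> nat \<Rightarrow> real" and wl wh :: "nat \<Rightarrow> real"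
  assumes e: "e \<le> 1"
    and wl: "\<And>k j. j < k \<Longrightarrow> g k (k - j) = wl j" "\<And>j. \<bar>wl j\<bar> \<le> real j + 1"
    and wh: "\<And>k i. g k (k + 1 + i) = wh i" "\<And>i. \<bar>wh i\<bar> \<le> real i + 1"
    and top: "(\<lambda>k. g k (2 * k + e + 1) / 2 ^ k) \<longlonglongrightarrow> 0"
  shows "(\<lambda>k. (\<Sum>P | admissible (2 * k + e) P. g k (mult_of (2 * k + e) P)) / 2 ^ k) \<longlonglongrightarrow>
    (\<Sum>j. wl j * (psi (2 * j + e) / 2 ^ (j + 1))) + (\<Sum>i. wh i * (2 ^ e / 2 ^ (i + 2)))"
proof -
  have eq: "(\<Sum>P | admissible (2 * k + e) P. g k (mult_of (2 * k + e) P)) / 2 ^ k =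
      (\<Sum>j. wl j * low_term e j k) + (\<Sum>i. wh i * high_term e i k) + g k (2 * k + e + 1) / 2 ^ k"
    if "k \<ge> 1" for k
    by (rule normalized_sum_by_offsets[OF that e wl(1)[of _ k] wh(1)[of k]])
  have ev: "\<forall>\<^sub>F k in sequentially.
      (\<Sum>j. wl j * low_term e j k) + (\<Sum>i. wh i * high_term e i k) + g k (2 * k + e + 1) / 2 ^ k =
      (\<Sum>P | admissible (2 * k + e) P. g k (mult_of (2 * k + e) P)) / 2 ^ k"
    unfolding eventually_sequentially by (intro exI[of _ 1] allI impI eq[symmetric])
  have "(\<lambda>k. (\<Sum>j. wl j * low_term e j k) + (\<Sum>i. wh i * high_term e i k) + g k (2 * k + e + 1) / 2 ^ k)
      \<longlonglongrightarrow> (\<Sum>j. wl j * (psi (2 * j + e) / 2 ^ (j + 1))) + (\<Sum>i. wh i * (2 ^ e / 2 ^ (i + 2))) + 0"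
    using tendsto_weighted_suminf(2)[OF tendsto_low_term[OF e] low_term_bound[OF e] wl(2)]
      tendsto_weighted_suminf(2)[OF tendsto_high_term[OF e] high_term_bound[OF e] wh(2)] top
    by (intro tendsto_add)
  from Lim_transform_eventually[OF this ev] show ?thesis by simp
qed

lemma convergent_centered_expected_multiplicity:
  assumes e: "e \<le> 1"
  shows "\<exists>\<mu>. (\<lambda>k. expected_multiplicity (2 * k + e) - real (2 * k + e) / 2) \<longlonglongrightarrow> \<mu>"
proof -
  let ?low = "\<lambda>j. psi (2 * j + e) / 2 ^ (j + 1)" and ?high = "\<lambda>i. (2::real) ^ e / 2 ^ (i + 2)"
  let ?N = "\<lambda>k. (\<Sum>P | admissible (2 * k + e) P.
      real (mult_of (2 * k + e) P) - real (2 * k + e) / 2) / 2 ^ k"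
  let ?D = "\<lambda>k. (\<Sum>P | admissible (2 * k + e) P. 1) / (2::real) ^ k"
  have "(\<lambda>k. (real (2 * k + e + 1) - real (2 * k + e) / 2) / 2 ^ k :: real) \<longlonglongrightarrow> 0"
    by real_asymp
  then have N: "?N \<longlonglongrightarrow> (\<Sum>j. - (real j + real e / 2) * ?low j) + (\<Sum>i. (real i + 1 - real e / 2) * ?high i)"
    using e by (intro tendsto_normalized_sum[where g = "\<lambda>k m. real m - real (2 * k + e) / 2"])
      (auto simp: of_nat_diff field_simps)
  have "(\<lambda>k. 1 / 2 ^ k :: real) \<longlonglongrightarrow> 0"
    by real_asymp
  then have D: "?D \<longlonglongrightarrow> (\<Sum>j. 1 * ?low j) + (\<Sum>i. 1 * ?high i)"
    using e by (intro tendsto_normalized_sum[where g = "\<lambda>k m. 1"]) auto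
  have "(\<Sum>j. 1 * ?low j) \<ge> 0"
    using tendsto_weighted_suminf(1)[OF tendsto_low_term[OF e] low_term_bound[OF e], of "\<lambda>_. 1"]
    by (intro suminf_nonneg) (auto simp: psi_nonneg)
  moreover have "(\<Sum>i. 1 * ?high i) > 0"
    using tendsto_weighted_suminf(1)[OF tendsto_high_term[OF e] high_term_bound[OF e], of "\<lambda>_. 1"]
    by (intro suminf_pos) auto
  ultimately have lim: "(\<lambda>k. ?N k / ?D k) \<longlonglongrightarrow>
      ((\<Sum>j. - (real j + real e / 2) * ?low j) + (\<Sum>i. (real i + 1 - real e / 2) * ?high i)) /
      ((\<Sum>j. 1 * ?low j) + (\<Sum>i. 1 * ?high i))"
    using N D by (intro tendsto_divide) auto
  have "?N k / ?D k = expected_multiplicity (2 * k + e) - real (2 * k + e) / 2" if "k \<ge> 1" for k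
    using expected_multiplicity_centered[of "2 * k + e"] that by simp
  then have "\<forall>\<^sub>F k in sequentially.
      ?N k / ?D k = expected_multiplicity (2 * k + e) - real (2 * k + e) / 2"
    unfolding eventually_sequentially by blast
  from Lim_transform_eventually[OF lim this] show ?thesis by blast
qed

theorem corollary5p3:
  shows "\<exists>\<mu>0 \<mu>1 :: real.
     ((\<lambda>k. expected_multiplicity (2*k) - real (2*k) / 2) \<longlonglongrightarrow> \<mu>0) \<and>
     ((\<lambda>k. expected_multiplicity (2*k+1) - real (2*k+1) / 2) \<longlonglongrightarrow> \<mu>1)"
  using convergent_centered_expected_multiplicity[of 0] convergent_centered_expected_multiplicity[of 1]
  by auto

end
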